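(* Let $G=(V,E)$ be an undirected graph, $a,b\in[0,1]$, $\vec{x}\in\mathbb{R}^n$ non-negative with $\|\vec{x}\|_1=1$, and $(w_i)_{i\ge0}$ a non-negative weight sequence with $\sum_{i\ge0}w_i=1$ such that there exist a constant $L_0\ge1$ and a constant $\lambda<1$ with $w_i\lambda_{\max}^i\le\lambda^i$ for all $i\ge L_0$, where $\lambda_{\max}$ is the maximum singular value of $\mathbf{P}=\mathbf{D}^{-a}\mathbf{A}\mathbf{D}^{-b}$. Let $\delta\in(0,1)$, $\vec{\pi}=\sum_{i=0}^\infty w_i\mathbf{P}^i\vec{x}$ and, for an integer $L$, $\vec{\pi}_L=\sum_{i=0}^{L}w_i\mathbf{P}^i\vec{x}$. Then for $L=\max\{L_0,\lceil\log_\lambda((1-\lambda)\delta/19)\rceil\}=O(\log(1/\delta))$ we have $\left\|\sum_{i=L+1}^\infty w_i\mathbf{P}^i\vec{x}\right\|_2\le\delta/19$, and consequently: if $\hat{\vec{\pi}}\in\mathbb{R}^n$ satisfies $|\vec{\pi}_L(v)-\hat{\vec{\pi}}(v)|\le\frac{1}{20}\vec{\pi}_L(v)$ for every $v\in V$ with $\vec{\pi}_L(v)>\frac{18}{19}\delta$, then $|\vec{\pi}(v)-\hat{\vec{\pi}}(v)|\le\frac{1}{10}\vec{\pi}(v)$ for every $v\in V$ with $\vec{\pi}(v)\ge\delta$.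
   Context: $G=(V,E)$ has $n$ nodes; $\mathbf{A}$ is its adjacency matrix and $\mathbf{D}$ the diagonal degree matrix with $\mathbf{D}(i,i)=\sum_j\mathbf{A}(i,j)$. *)

theory Defs
  imports "HOL-Analysis.Analysis"
begin

definition undirected_graph :: "('n \<Rightarrow> 'n \<Rightarrow> bool) \<Rightarrow> bool" where
  "undirected_graph E \<longleftrightarrow> (\<forall>u v. E u v \<longleftrightarrow> E v u) \<and> (\<forall>v. \<not> E v v)"

definition adj_mat :: "('n::finite \<Rightarrow> 'n \<Rightarrow> bool) \<Rightarrow> real^'n^'n" where
  "adj_mat E = (\<chi> i j. if E i j then 1 else 0)"

definition degree :: "('n::finite \<Rightarrow> 'n \<Rightarrow> bool) \<Rightarrow> 'n \<Rightarrow> real" where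
  "degree E i = (\<Sum>j\<in>UNIV. adj_mat E $ i $ j)"

text \<open>P = D^(-a) A D^(-b), entrywise P(i,j) = d_i^(-a) A(i,j) d_j^(-b).
  (Rows/columns of isolated vertices are zero since A vanishes there.)\<close>

definition trans_mat :: "('n::finite \<Rightarrow> 'n \<Rightarrow> bool) \<Rightarrow> real \<Rightarrow> real \<Rightarrow> real^'n^'n" where
  "trans_mat E a b = (\<chi> i j. degree E i powr (-a) * adj_mat E $ i $ j * degree E j powr (-b))"

primrec matpow :: "real^'n^'n \<Rightarrow> nat \<Rightarrow> real^'n^'n" where
  "matpow M 0 = mat 1"
| "matpow M (Suc k) = M ** matpow M k"

definition max_singular_value :: "real^'n^'n \<Rightarrow> real" where
  "max_singular_value M =
     sqrt (Max {\<mu>. \<exists>v. v \<noteq> 0 \<and> (transpose M ** M) *v v = \<mu> *\<^sub>R v})"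

end

theory Submission
  imports Defs
begin

text \<open>A unit vector u maximising |P u| is an eigenvector of P^T P with eigenvalue |P u|^2
  (the first-order condition of the Rayleigh quotient), so |P y| \<le> \<sigma> |y| for the maximum singular
  value \<sigma>. As |x|_2 \<le> |x|_1 = 1, the i-th term of the series has norm at most w_i \<sigma>^i \<le> \<lambda>^i for
  i \<ge> L_0, and the tail beyond L is at most \<lambda>^(L+1) / (1 - \<lambda>) \<le> \<lambda>\<delta>/19 < \<delta>/19 by the choice
  of L. Since P, x and w are nonnegative, the tail is also componentwise nonnegative, so
  \<pi>(v) \<ge> \<delta> forces \<pi>_L(v) > 18\<delta>/19 and the two error bounds combine.\<close>

definition eigenvalues :: "real^'n^'n \<Rightarrow> real set" where
  "eigenvalues M = {\<mu>. \<exists>v. v \<noteq> 0 \<and> M *v v = \<mu> *\<^sub>R v}"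

lemma max_singular_value_eq_sqrt_Max_eigenvalues:
  "max_singular_value M = sqrt (Max (eigenvalues (transpose M ** M)))"
  unfolding max_singular_value_def eigenvalues_def ..

lemma inner_transpose_mult_self:
  fixes P :: "real^'n::finite^'n"
  shows "((transpose P ** P) *v y) \<bullet> z = (P *v y) \<bullet> (P *v z)"
  by (simp add: matrix_vector_mul_assoc[symmetric] dot_lmul_matrix)

lemma finite_eigenvalues_if_self_adjoint:
  fixes M :: "real^'n::finite^'n"
  assumes self_adjoint: "\<And>y z. (M *v y) \<bullet> z = y \<bullet> (M *v z)"
  shows "finite (eigenvalues M)"
proof -
  define eigvec where "eigvec \<mu> = (SOME v. v \<noteq> 0 \<and> M *v v = \<mu> *\<^sub>R v)" for \<mu>
  have eigvec: "eigvec \<mu> \<noteq> 0" "M *v eigvec \<mu> = \<mu> *\<^sub>R eigvec \<mu>" if "\<mu> \<in> eigenvalues M" for \<mu>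
    using someI_ex[OF that[unfolded eigenvalues_def mem_Collect_eq]] unfolding eigvec_def by blast+
  have orth: "eigvec \<mu> \<bullet> eigvec \<nu> = 0"
    if "\<mu> \<in> eigenvalues M" "\<nu> \<in> eigenvalues M" "\<mu> \<noteq> \<nu>" for \<mu> \<nu>
  proof -
    have "\<mu> * (eigvec \<mu> \<bullet> eigvec \<nu>) = \<nu> * (eigvec \<mu> \<bullet> eigvec \<nu>)"
      using self_adjoint[of "eigvec \<mu>" "eigvec \<nu>"] eigvec(2)[OF that(1)] eigvec(2)[OF that(2)]
      by simp
    thus ?thesis using that(3) by simp
  qed
  have "inj_on eigvec (eigenvalues M)"
    by (rule inj_onI) (metis orth eigvec(1) inner_eq_zero_iff)
  moreover have "independent (eigvec ` eigenvalues M)"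
  proof (rule pairwise_orthogonal_independent)
    show "pairwise orthogonal (eigvec ` eigenvalues M)"
      unfolding pairwise_def orthogonal_def by (metis imageE orth)
  qed (auto dest: eigvec(1))
  ultimately show ?thesis
    using independent_bound finite_imageD by blast
qed

lemma linear_coeff_eq_0_if_quadratic_nonpos:
  fixes A B :: real
  assumes "\<And>t. 2 * t * A + t^2 * B \<le> 0"
  shows "A = 0"
proof -
  define c where "c = \<bar>B\<bar> + 1"
  have "c > 0" "2 * c + B > 0" unfolding c_def by auto
  have "(2 * (A / c) * A + (A / c)^2 * B) * c^2 \<le> 0"
    using assms[of "A / c"] by (simp add: mult_nonpos_nonneg)
  also have "(2 * (A / c) * A + (A / c)^2 * B) * c^2 = A^2 * (2 * c + B)"
    using \<open>c > 0\<close> by (simp add: field_simps power2_eq_square)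
  finally have "A^2 \<le> 0"
    using \<open>2 * c + B > 0\<close> by (simp add: mult_le_0_iff)
  thus ?thesis by simp
qed

lemma norm_add_scaleR_power2:
  fixes a b :: "'a::real_inner"
  shows "norm (a + t *\<^sub>R b) ^ 2 = norm a ^ 2 + 2 * t * (a \<bullet> b) + t^2 * norm b ^ 2"
  unfolding power2_norm_eq_inner
  by (simp add: inner_add_left inner_add_right inner_commute power2_eq_square algebra_simps)

lemma eigenvector_if_maximises_norm_ratio:
  fixes P :: "real^'n::finite^'n"
  assumes "norm u = 1"
    and max: "\<And>y. norm (P *v y)^2 \<le> norm (P *v u)^2 * norm y^2"
  shows "(transpose P ** P) *v u = norm (P *v u)^2 *\<^sub>R u"
proof -
  define \<mu> where "\<mu> = norm (P *v u)^2"
  have "(P *v u) \<bullet> (P *v h) = \<mu> * (u \<bullet> h)" for h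
  proof -
    have "2 * t * ((P *v u) \<bullet> (P *v h) - \<mu> * (u \<bullet> h))
            + t^2 * (norm (P *v h)^2 - \<mu> * norm h ^ 2) \<le> 0" for t
      using max[of "u + t *\<^sub>R h"] \<open>norm u = 1\<close>
      by (simp add: matrix_vector_right_distrib matrix_vector_mult_scaleR
          norm_add_scaleR_power2 \<mu>_def algebra_simps)
    from linear_coeff_eq_0_if_quadratic_nonpos[OF this] show ?thesis by simp
  qed
  hence "\<forall>h. ((transpose P ** P) *v u) \<bullet> h = (\<mu> *\<^sub>R u) \<bullet> h"
    by (simp add: inner_transpose_mult_self)
  thus ?thesis unfolding vector_eq_rdot \<mu>_def .
qed

lemma norm_ratio_attains_max:
  fixes P :: "real^'n::finite^'n"
  obtains u where "norm u = 1" "\<And>y. norm (P *v y)^2 \<le> norm (P *v u)^2 * norm y^2"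
proof -
  have "continuous_on (sphere 0 1) (\<lambda>y. norm (P *v y)^2)"
    by (intro continuous_intros linear_continuous_on matrix_vector_mul_linear)
  moreover have "sphere (0::real^'n) 1 \<noteq> {}"
    by simp
  ultimately obtain u where u: "u \<in> sphere (0::real^'n) 1"
    and umax: "\<And>y. y \<in> sphere 0 1 \<Longrightarrow> norm (P *v y)^2 \<le> norm (P *v u)^2"
    using continuous_attains_sup[OF compact_sphere] by blast
  have "norm (P *v y)^2 \<le> norm (P *v u)^2 * norm y^2" for y
  proof (cases "y = 0")
    case False
    have "norm (P *v y) = norm y * norm (P *v (y /\<^sub>R norm y))"
      using False by (simp add: matrix_vector_mult_scaleR)
    moreover have "norm (P *v (y /\<^sub>R norm y))^2 \<le> norm (P *v u)^2"
      using False by (intro umax) simp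
    ultimately show ?thesis
      by (simp add: power_mult_distrib mult.commute mult_left_mono)
  qed simp
  with u show ?thesis
    using that by simp
qed

lemma norm_matrix_vector_mult_le_max_singular_value:
  fixes P :: "real^'n::finite^'n"
  shows "norm (P *v y) \<le> max_singular_value P * norm y"
proof -
  obtain u where u: "norm u = 1" and umax: "\<And>y. norm (P *v y)^2 \<le> norm (P *v u)^2 * norm y^2"
    using norm_ratio_attains_max[of P] by blast
  have "u \<noteq> 0"
    using u by auto
  hence "norm (P *v u)^2 \<in> eigenvalues (transpose P ** P)"
    unfolding eigenvalues_def using eigenvector_if_maximises_norm_ratio[OF u umax] by blast
  moreover have "finite (eigenvalues (transpose P ** P))"
    by (rule finite_eigenvalues_if_self_adjoint) (metis inner_transpose_mult_self inner_commute)
  ultimately have "norm (P *v u)^2 \<le> Max (eigenvalues (transpose P ** P))"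
    by simp
  hence "norm (P *v y)^2 \<le> Max (eigenvalues (transpose P ** P)) * norm y^2"
    using umax[of y] by (meson order_trans mult_right_mono zero_le_power2)
  hence "norm (P *v y) \<le> sqrt (Max (eigenvalues (transpose P ** P)) * norm y^2)"
    by (rule real_le_rsqrt)
  thus ?thesis by (simp add: max_singular_value_eq_sqrt_Max_eigenvalues real_sqrt_mult)
qed

lemma max_singular_value_nonneg:
  fixes P :: "real^'n::finite^'n"
  shows "0 \<le> max_singular_value P"
proof -
  fix k :: 'n
  have "0 \<le> norm (P *v axis k 1)" by simp
  also have "\<dots> \<le> max_singular_value P * norm (axis k (1::real))"
    by (rule norm_matrix_vector_mult_le_max_singular_value)
  finally show ?thesis by simp
qed

lemma norm_matpow_vector_mult_le:
  fixes P :: "real^'n::finite^'n"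
  shows "norm (matpow P i *v y) \<le> max_singular_value P ^ i * norm y"
proof (induction i)
  case (Suc i)
  have "norm (matpow P (Suc i) *v y) = norm (P *v (matpow P i *v y))"
    by (simp add: matrix_vector_mul_assoc)
  also have "\<dots> \<le> max_singular_value P * norm (matpow P i *v y)"
    by (rule norm_matrix_vector_mult_le_max_singular_value)
  also have "\<dots> \<le> max_singular_value P * (max_singular_value P ^ i * norm y)"
    using Suc.IH max_singular_value_nonneg by (rule mult_left_mono)
  finally show ?case by (simp add: mult.assoc)
qed simp

lemma norm_scaleR_matpow_le:
  fixes P :: "real^'n::finite^'n"
  assumes "0 \<le> c" "norm x \<le> 1" "c * max_singular_value P ^ i \<le> r"
  shows "norm (c *\<^sub>R (matpow P i *v x)) \<le> r"
proof -
  have "norm (matpow P i *v x) \<le> max_singular_value P ^ i"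
    by (intro order_trans[OF norm_matpow_vector_mult_le mult_left_le])
      (simp_all add: assms(2) max_singular_value_nonneg)
  thus ?thesis
    using assms(1,3) by (simp add: order_trans[OF mult_left_mono])
qed

lemma trans_mat_nonneg: "0 \<le> trans_mat E a b $ i $ j"
  unfolding trans_mat_def adj_mat_def by simp

lemma matpow_nonneg:
  fixes P :: "real^'n::finite^'n"
  assumes "\<And>i j. 0 \<le> P $ i $ j"
  shows "0 \<le> matpow P k $ i $ j"
  by (induction k arbitrary: i j) (simp_all add: mat_def matrix_matrix_mult_def assms sum_nonneg)

lemma matrix_vector_mult_nonneg:
  fixes M :: "real^'n::finite^'m"
  assumes "\<And>i j. 0 \<le> M $ i $ j" "\<And>j. 0 \<le> x $ j"
  shows "0 \<le> (M *v x) $ i"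
  by (simp add: matrix_vector_mult_def assms sum_nonneg)

lemma suminf_vec_nth_nonneg:
  fixes f :: "nat \<Rightarrow> real^'n"
  assumes "summable f" "\<And>i. 0 \<le> f i $ v"
  shows "0 \<le> suminf f $ v"
  using suminf_nonneg[OF bounded_linear.summable[OF bounded_linear_vec_nth assms(1)] assms(2)]
  by (simp add: bounded_linear.suminf[OF bounded_linear_vec_nth assms(1)])

lemma norm_suminf_tail_le_geometric:
  fixes f :: "nat \<Rightarrow> 'a::banach"
  assumes "\<And>i. L < i \<Longrightarrow> norm (f i) \<le> lam ^ i" "0 \<le> lam" "lam < 1"
  shows "norm (\<Sum>i. f (i + Suc L)) \<le> lam ^ Suc L / (1 - lam)"
proof -
  have geometric: "summable (\<lambda>i. lam ^ i)"
    using assms by (intro summable_geometric) simp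
  have "norm (f (i + Suc L)) \<le> lam ^ Suc L * lam ^ i" for i
    using assms(1)[of "i + Suc L"] by (simp add: power_add mult_ac)
  hence "norm (\<Sum>i. f (i + Suc L)) \<le> (\<Sum>i. lam ^ Suc L * lam ^ i)"
    by (intro norm_suminf_le summable_mult geometric)
  also have "\<dots> = lam ^ Suc L / (1 - lam)"
    using assms by (simp add: suminf_mult[OF geometric] suminf_geometric)
  finally show ?thesis .
qed

lemma power_le_if_log_le:
  fixes lam c :: real
  assumes "0 < lam" "lam < 1" "0 < c" "log lam c \<le> real L"
  shows "lam ^ L \<le> c"
proof -
  have "lam ^ L = lam powr real L"
    using assms by (simp add: powr_realpow)
  also have "\<dots> \<le> lam powr (log lam c)"
    using assms by (intro powr_mono') auto
  also have "\<dots> = c"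
    using assms by simp
  finally show ?thesis .
qed

lemma geometric_tail_less_if_log_le:
  fixes lam \<epsilon> :: real
  assumes "0 < lam" "lam < 1" "0 < \<epsilon>" "log lam ((1 - lam) * \<epsilon>) \<le> real L"
  shows "lam ^ Suc L / (1 - lam) < \<epsilon>"
proof -
  have "lam ^ L \<le> (1 - lam) * \<epsilon>"
    using assms by (intro power_le_if_log_le) auto
  hence "lam * (lam ^ L / (1 - lam)) \<le> lam * \<epsilon>"
    using assms(1,2) by (intro mult_left_mono) (simp_all add: pos_divide_le_eq mult.commute)
  also have "\<dots> < \<epsilon>"
    using assms by simp
  finally show ?thesis
    by simp
qed

lemma suminf_split_atMost:
  fixes f :: "nat \<Rightarrow> 'a::real_normed_vector"
  assumes "summable f"
  shows "suminf f = (\<Sum>i\<le>L. f i) + (\<Sum>i. f (i + L + 1))"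
  using suminf_split_initial_segment[OF assms, of "Suc L"]
  by (simp add: lessThan_Suc_atMost add.commute)

lemma relative_error_of_truncation:
  fixes \<pi> \<pi>L T \<pi>h :: "real^'n::finite"
  assumes "\<pi> = \<pi>L + T" "\<And>v. 0 \<le> T $ v" "norm T < \<delta> / 19"
    and "\<forall>v. \<pi>L $ v > 18 / 19 * \<delta> \<longrightarrow> \<bar>\<pi>L $ v - \<pi>h $ v\<bar> \<le> \<pi>L $ v / 20"
    and "\<delta> \<le> \<pi> $ v"
  shows "\<bar>\<pi> $ v - \<pi>h $ v\<bar> \<le> \<pi> $ v / 10"
proof -
  have T: "0 \<le> T $ v" "T $ v < \<delta> / 19" and split: "\<pi> $ v = \<pi>L $ v + T $ v"
    using assms(1-3) component_le_norm_cart[of T v] by auto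
  hence "\<pi>L $ v > 18 / 19 * \<delta>"
    using assms(5) by linarith
  moreover from this assms(4) have "\<bar>\<pi>L $ v - \<pi>h $ v\<bar> \<le> \<pi>L $ v / 20"
    by blast
  ultimately show ?thesis
    using T split by linarith
qed

theorem theoremC2:
  fixes E :: "'n::finite \<Rightarrow> 'n \<Rightarrow> bool"
    and a b :: real
    and x :: "real^'n"
    and w :: "nat \<Rightarrow> real"
    and L0 :: nat
    and lam :: real
    and \<delta> :: real
  assumes "undirected_graph E"
    and "0 \<le> a" "a \<le> 1" "0 \<le> b" "b \<le> 1"
    and "\<forall>v. 0 \<le> x $ v" "(\<Sum>v\<in>UNIV. x $ v) = 1"
    and "\<forall>i. 0 \<le> w i" "w sums 1"
    and "L0 \<ge> 1" "0 < lam" "lam < 1"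
    and "\<forall>i\<ge>L0. w i * max_singular_value (trans_mat E a b) ^ i \<le> lam ^ i"
    and "0 < \<delta>" "\<delta> < 1"
  shows "let P = trans_mat E a b;
             \<pi> = (\<Sum>i. w i *\<^sub>R (matpow P i *v x));
             L = max L0 (nat \<lceil>log lam ((1 - lam) * \<delta> / 19)\<rceil>);
             \<pi>L = (\<Sum>i\<le>L. w i *\<^sub>R (matpow P i *v x))
         in norm (\<Sum>i. w (i + L + 1) *\<^sub>R (matpow P (i + L + 1) *v x)) \<le> \<delta> / 19
            \<and> (\<forall>\<pi>h :: real^'n.
                 (\<forall>v. \<pi>L $ v > 18 / 19 * \<delta> \<longrightarrow> \<bar>\<pi>L $ v - \<pi>h $ v\<bar> \<le> \<pi>L $ v / 20)
                 \<longrightarrow> (\<forall>v. \<pi> $ v \<ge> \<delta> \<longrightarrow> \<bar>\<pi> $ v - \<pi>h $ v\<bar> \<le> \<pi> $ v / 10))"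
proof -
  note x_nonneg = assms(6) and w_nonneg = assms(8) and lam = assms(11,12)
  define P where "P = trans_mat E a b"
  define L where "L = max L0 (nat \<lceil>log lam ((1 - lam) * \<delta> / 19)\<rceil>)"
  define f where "f = (\<lambda>i. w i *\<^sub>R (matpow P i *v x))"
  define T where "T = (\<Sum>i. w (i + L + 1) *\<^sub>R (matpow P (i + L + 1) *v x))"
  have "norm x \<le> 1"
    using norm_le_l1_cart[of x] x_nonneg assms(7) by simp
  hence f_le: "norm (f i) \<le> lam ^ i" if "L0 \<le> i" for i
    unfolding f_def using w_nonneg assms(13) that by (intro norm_scaleR_matpow_le) (auto simp: P_def)
  hence "summable f"
    using lam by (intro summable_comparison_test'[OF summable_geometric]) auto
  have cutoff: "log lam ((1 - lam) * (\<delta> / 19)) \<le> real L"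
    unfolding L_def of_nat_max times_divide_eq_right by (rule max.coboundedI2[OF real_nat_ceiling_ge])
  have T_eq: "T = (\<Sum>i. f (i + Suc L))"
    unfolding T_def f_def by simp
  have "norm T \<le> lam ^ Suc L / (1 - lam)"
    unfolding T_eq using f_le lam by (intro norm_suminf_tail_le_geometric) (auto simp: L_def)
  also have "\<dots> < \<delta> / 19"
    using lam assms(14) cutoff by (intro geometric_tail_less_if_log_le) auto
  finally have T_small: "norm T < \<delta> / 19" .
  have "0 \<le> f i $ v" for i v
    unfolding f_def P_def using w_nonneg x_nonneg trans_mat_nonneg
    by (auto intro!: mult_nonneg_nonneg matrix_vector_mult_nonneg matpow_nonneg)
  hence T_nonneg: "0 \<le> T $ v" for v
    unfolding T_eq using \<open>summable f\<close> by (intro suminf_vec_nth_nonneg summable_ignore_initial_segment)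
  have series_split: "(\<Sum>i. w i *\<^sub>R (matpow P i *v x)) = (\<Sum>i\<le>L. w i *\<^sub>R (matpow P i *v x)) + T"
    using suminf_split_atMost[OF \<open>summable f\<close>, of L] unfolding f_def T_def .
  show ?thesis
    using less_imp_le[OF T_small] relative_error_of_truncation[OF series_split T_nonneg T_small]
    unfolding Let_def P_def[symmetric] L_def[symmetric] T_def[symmetric] by blast
qed

end
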